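(* Let $\phi$ be a highly self-concordant barrier on an open convex set $K\subset\mathbb R^n$ and $g(x)=\nabla^2\phi(x)$. Then for all $x,y\in K$ with $\|y-x\|_{g(x)}<1$ and all $v,w\in\mathbb R^n$: (a) $\|Dg(x)[v,v]-Dg(y)[v,v]\|_{g(x)^{-1}}\le\frac{6}{(1-\|y-x\|_{g(x)})^3}\|v\|_{g(x)}^2\|y-x\|_{g(x)}$; (b) $\|Dg(x)[v,v]-Dg(x)[w,w]\|_{g(x)^{-1}}\le2\|v-w\|_{g(x)}\|v+w\|_{g(x)}$.
   Context: A highly self-concordant barrier $\phi:K\to\mathbb R$ is a convex $C^4$ function with $\phi(x)\to\infty$ as $x\to\partial K$, $|D^3\phi(x)[h,h,h]|\le2(D^2\phi(x)[h,h])^{3/2}$ and $|D^4\phi(x)[h,h,h,h]|\le6(D^2\phi(x)[h,h])^2$ for all $x\in K$, $h\in\mathbb R^n$. $\|u\|_{g(x)}=\sqrt{u^\top g(x)u}$, $\|u\|_{g(x)^{-1}}=\sqrt{u^\top g(x)^{-1}u}$. $Dg(x)[u,w]\in\mathbb R^n$ is the vector with $i$-th coordinate $u^\top\partial_ig(x)w=D^3\phi(x)[e_i,u,w]$. *)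

theory Defs
  imports "HOL-Analysis.Analysis"
begin

text \<open>Iterated directional (Frechet) derivatives:
  dderiv f [h1,...,hk] x = D^k f(x)[h1,...,hk].\<close>
fun dderiv :: "('a::real_normed_vector \<Rightarrow> real) \<Rightarrow> 'a list \<Rightarrow> 'a \<Rightarrow> real" where
  "dderiv f [] = f"
| "dderiv f (h # hs) = (\<lambda>x. frechet_derivative (dderiv f hs) (at x) h)"

definition C_k_on :: "nat \<Rightarrow> 'a::real_normed_vector set \<Rightarrow> ('a \<Rightarrow> real) \<Rightarrow> bool" where
  "C_k_on k K f \<longleftrightarrow>
     (\<forall>hs. length hs < k \<longrightarrow> (\<forall>x\<in>K. dderiv f hs differentiable (at x))) \<and>
     (\<forall>hs. length hs = k \<longrightarrow> continuous_on K (dderiv f hs))"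

definition hess :: "(real^'n \<Rightarrow> real) \<Rightarrow> real^'n \<Rightarrow> real^'n^'n" where
  "hess \<phi> x = (\<chi> i j. dderiv \<phi> [axis i 1, axis j 1] x)"

definition Dg :: "(real^'n \<Rightarrow> real) \<Rightarrow> real^'n \<Rightarrow> real^'n \<Rightarrow> real^'n \<Rightarrow> real^'n" where
  "Dg \<phi> x u w = (\<chi> i. dderiv \<phi> [axis i 1, u, w] x)"

definition lnorm :: "real^'n^'n \<Rightarrow> real^'n \<Rightarrow> real" where
  "lnorm A u = sqrt (u \<bullet> (A *v u))"

definition hsc_barrier :: "(real^'n) set \<Rightarrow> (real^'n \<Rightarrow> real) \<Rightarrow> bool" where
  "hsc_barrier K \<phi> \<longleftrightarrow>
     convex_on K \<phi> \<and> C_k_on 4 K \<phi> \<and>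
     (\<forall>z\<in>frontier K. filterlim \<phi> at_top (at z within K)) \<and>
     (\<forall>x\<in>K. \<forall>h. \<bar>dderiv \<phi> [h,h,h] x\<bar> \<le> 2 * (dderiv \<phi> [h,h] x) powr (3/2)) \<and>
     (\<forall>x\<in>K. \<forall>h. \<bar>dderiv \<phi> [h,h,h,h] x\<bar> \<le> 6 * (dderiv \<phi> [h,h] x)\<^sup>2) \<and>
     (\<forall>x\<in>K. invertible (hess \<phi> x))"

end

theory Submission
  imports Defs
begin

(* The inverse local norm is the dual of the local norm, and Dg(x)[v,w] . q = D^3 phi(x)[q,v,w],
   so both inequalities are bounds on D^3 phi(x)[q,_,_] relative to ||q||_x.

   Polarization turns the self-concordance bounds on the diagonal into
   |D^3 phi[a,b,c]| <= 2 ||a|| ||b|| ||c|| and |D^4 phi[a,b,c,c]| <= 6 ||a|| ||b|| ||c||^2 in the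
   local norm; in the cubic case this is a gradient bound for binary cubic forms on the unit circle.
   Part (b) then follows from D^3 phi[q,v,v] - D^3 phi[q,w,w] = D^3 phi[q, v - w, v + w].

   For part (a), put r = ||y - x||_x and x_s = x + s (y - x). The cubic bound makes
   1 / ||y - x||_{x_s} + s nondecreasing, so ||y - x||_{x_s} <= r / (1 - s r), and then every local
   norm satisfies ||u||_{x_s} <= ||u||_x / (1 - s r). Hence the quartic bound gives
   |d/ds D^3 phi(x_s)[q,v,v]| <= 6 r ||q||_x ||v||_x^2 / (1 - s r)^4, and integrating over [0, 1]
   yields 2 ||q|| ||v||^2 ((1 - r)^-3 - 1) <= 6 r ||q|| ||v||^2 / (1 - r)^3. *)

section \<open>Gradients of binary cubic forms\<close>

lemma sin_treble_sin: "sin (3 * x) = 3 * sin x - 4 * sin (x::real) ^ 3"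
proof -
  have "sin (3 * x) = sin (2 * x) * cos x + cos (2 * x) * sin x"
    using sin_add[of "2 * x" x] by simp
  also have "\<dots> = 2 * sin x * (cos x)\<^sup>2 + (1 - 2 * (sin x)\<^sup>2) * sin x"
    by (simp add: sin_double cos_double_sin power2_eq_square)
  also have "\<dots> = 3 * sin x - 4 * sin x ^ 3"
    unfolding cos_squared_eq by (simp add: power3_eq_cube power2_eq_square algebra_simps)
  finally show ?thesis .
qed

definition binary_cubic :: "real \<Rightarrow> real \<Rightarrow> real \<Rightarrow> real \<Rightarrow> real \<Rightarrow> real \<Rightarrow> real" where
  "binary_cubic A B C D x y = x^3 * A + 3 * x^2 * y * B + 3 * x * y^2 * C + y^3 * D"

lemma binary_cubic_trisection:
  fixes c e r :: real
  assumes "c\<^sup>2 + e\<^sup>2 = 1" and "r\<^sup>2 = 3"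
  shows "(4*c^3 - 3*c) * A + (3*e - 4*e^3) * B =
      (4*c^2 - 1)^2 / 9 * binary_cubic A B C D c e
    + 4*e^2/9 * (2*r*c*e - 2*c^2 - 1) * binary_cubic A B C D ((c - r*e)/2) ((e + r*c)/2)
    + 4*e^2/9 * (2*r*c*e + 2*c^2 + 1) * binary_cubic A B C D ((-c - r*e)/2) ((r*c - e)/2)"
proof -
  have "binary_cubic A B C D a b = 8 * binary_cubic A B C D (a/2) (b/2)" for a b
    unfolding binary_cubic_def by (simp add: field_simps power3_eq_cube power2_eq_square)
  moreover have "72 * ((4*c^3 - 3*c) * A + (3*e - 4*e^3) * B) =
      8 * (4*c^2 - 1)^2 * (c^3*A + 3*c^2*e*B + 3*c*e^2*C + e^3*D)
    + 4*e^2 * (2*r*c*e - 2*c^2 - 1) * ((c - r*e)^3*A + 3*(c - r*e)^2*(e + r*c)*B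
        + 3*(c - r*e)*(e + r*c)^2*C + (e + r*c)^3*D)
    + 4*e^2 * (2*r*c*e + 2*c^2 + 1) * ((-c - r*e)^3*A + 3*(-c - r*e)^2*(r*c - e)*B
        + 3*(-c - r*e)*(r*c - e)^2*C + (r*c - e)^3*D)"
    using assms by algebra
  ultimately show ?thesis
    unfolding binary_cubic_def by (simp add: field_simps)
qed

lemma trisection_weights:
  fixes c e r :: real
  assumes "c\<^sup>2 + e\<^sup>2 = 1" and "r\<^sup>2 = 3"
  shows "\<bar>2*r*c*e\<bar> \<le> 2*c^2 + 1"
    and "(4*c^2 - 1)^2 / 9 - 4*e^2/9 * (2*r*c*e - 2*c^2 - 1) + 4*e^2/9 * (2*r*c*e + 2*c^2 + 1) = 1"
proof -
  have "(2*c^2 + 1)^2 - (2*r*c*e)^2 = (4*c^2 - 1)^2"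
    using assms by algebra
  then have "(2*r*c*e)^2 \<le> (2*c^2 + 1)^2"
    by (smt (verit) zero_le_power2)
  then show "\<bar>2*r*c*e\<bar> \<le> 2*c^2 + 1"
    by (simp add: power2_le_iff_abs_le[symmetric])
  have "(4*c^2 - 1)^2 + 8*e^2 * (2*c^2 + 1) = 9"
    using assms by algebra
  then show "(4*c^2 - 1)^2 / 9 - 4*e^2/9 * (2*r*c*e - 2*c^2 - 1) + 4*e^2/9 * (2*r*c*e + 2*c^2 + 1) = 1"
    by (simp add: field_simps)
qed

(* (A, B) is a third of the gradient of the cubic at (1, 0). With the direction written as
   (cos t, sin t), the trisection identity expresses cos t * A + sin t * B as a combination of
   the values of the cubic at the angles t/3, t/3 + pi/3 and t/3 + 2 pi/3, with weights whose
   absolute values add up to 1. *)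
lemma binary_cubic_gradient_bound:
  assumes "l\<^sup>2 + m\<^sup>2 = 1"
    and bound: "\<And>x y. x\<^sup>2 + y\<^sup>2 = 1 \<Longrightarrow> \<bar>binary_cubic A B C D x y\<bar> \<le> M"
  shows "\<bar>l * A + m * B\<bar> \<le> M"
proof -
  obtain t where t: "l = cos t" "m = sin t"
    using sincos_total_2pi[OF assms(1)] by metis
  define c where "c = cos (t/3)"
  define e where "e = sin (t/3)"
  define r where "r = sqrt 3"
  define p where "p = binary_cubic A B C D"
  have ce: "c\<^sup>2 + e\<^sup>2 = 1" and r: "r\<^sup>2 = 3" "r \<ge> 0"
    unfolding c_def e_def r_def by simp_all
  have "l = 4*c^3 - 3*c" "m = 3*e - 4*e^3"
    unfolding t c_def e_def using cos_treble_cos[of "t/3"] sin_treble_sin[of "t/3"] by simp_all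
  then have eq: "l * A + m * B =
      (4*c^2 - 1)^2 / 9 * p c e
    + 4*e^2/9 * (2*r*c*e - 2*c^2 - 1) * p ((c - r*e)/2) ((e + r*c)/2)
    + 4*e^2/9 * (2*r*c*e + 2*c^2 + 1) * p ((-c - r*e)/2) ((r*c - e)/2)"
    unfolding p_def using binary_cubic_trisection[OF ce r(1)] by simp
  have on_circle: "((c - r*e)/2)\<^sup>2 + ((e + r*c)/2)\<^sup>2 = 1" "((-c - r*e)/2)\<^sup>2 + ((r*c - e)/2)\<^sup>2 = 1"
  proof -
    have "(c - r*e)\<^sup>2 + (e + r*c)\<^sup>2 = 4" "(-c - r*e)\<^sup>2 + (r*c - e)\<^sup>2 = 4"
      using ce r by algebra+
    then show "((c - r*e)/2)\<^sup>2 + ((e + r*c)/2)\<^sup>2 = 1" "((-c - r*e)/2)\<^sup>2 + ((r*c - e)/2)\<^sup>2 = 1"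
      by (simp_all add: power_divide add_divide_distrib[symmetric])
  qed
  have p_bounds: "\<bar>p c e\<bar> \<le> M" "\<bar>p ((c - r*e)/2) ((e + r*c)/2)\<bar> \<le> M"
      "\<bar>p ((-c - r*e)/2) ((r*c - e)/2)\<bar> \<le> M"
    unfolding p_def using bound ce on_circle by blast+
  define w0 where "w0 = (4*c^2 - 1)^2 / 9"
  define w1 where "w1 = 4*e^2/9 * (2*r*c*e - 2*c^2 - 1)"
  define w2 where "w2 = 4*e^2/9 * (2*r*c*e + 2*c^2 + 1)"
  have w: "w0 \<ge> 0" "w1 \<le> 0" "w2 \<ge> 0" "w0 - w1 + w2 = 1"
    using trisection_weights[OF ce r(1)] unfolding w0_def w1_def w2_def
    by (auto intro: mult_nonneg_nonpos mult_nonneg_nonneg)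
  have "\<bar>l * A + m * B\<bar> \<le> \<bar>w0 * p c e\<bar> + \<bar>w1 * p ((c - r*e)/2) ((e + r*c)/2)\<bar>
      + \<bar>w2 * p ((-c - r*e)/2) ((r*c - e)/2)\<bar>"
    unfolding eq w0_def[symmetric] w1_def[symmetric] w2_def[symmetric] by linarith
  also have "\<dots> \<le> w0 * M + (- w1) * M + w2 * M"
    using w p_bounds by (intro add_mono) (auto simp: abs_mult intro: mult_left_mono mult_left_mono_neg)
  also have "\<dots> = (w0 - w1 + w2) * M"
    by (simp add: algebra_simps)
  finally show ?thesis
    using w(4) by simp
qed

section \<open>Symmetric multilinear forms bounded on the diagonal\<close>

locale spd_form =
  fixes B :: "'a::real_vector \<Rightarrow> 'a \<Rightarrow> real"
  assumes linear_left: "\<And>b. linear (\<lambda>a. B a b)"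
    and sym: "\<And>a b. B a b = B b a"
    and pos: "\<And>a. a \<noteq> 0 \<Longrightarrow> B a a > 0"
begin

lemma linear_right: "linear (\<lambda>b. B a b)"
  using linear_left[of a] by (subst sym)

lemmas bilinear_simps =
  linear_add[OF linear_left] linear_add[OF linear_right]
  linear_diff[OF linear_left] linear_diff[OF linear_right]
  linear_scale[OF linear_left] linear_scale[OF linear_right]
  linear_0[OF linear_left] linear_0[OF linear_right]
  linear_neg[OF linear_left] linear_neg[OF linear_right]

lemma nonneg: "B a a \<ge> 0"
  using pos[of a] by (cases "a = 0") (auto simp: bilinear_simps)

definition fnorm :: "'a \<Rightarrow> real" where
  "fnorm a = sqrt (B a a)"

lemma fnorm_power2: "fnorm a ^ 2 = B a a"
  unfolding fnorm_def by (simp add: nonneg)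

lemma fnorm_pos: "a \<noteq> 0 \<Longrightarrow> fnorm a > 0"
  unfolding fnorm_def using pos by simp

lemma B_normalized: "a \<noteq> 0 \<Longrightarrow> B (a /\<^sub>R fnorm a) (a /\<^sub>R fnorm a) = 1"
  using fnorm_pos[of a] fnorm_power2[of a] pos[of a]
  by (simp add: bilinear_simps power2_eq_square field_simps)

lemma symmetric_bilinear_bound:
  fixes Q :: "'a \<Rightarrow> 'a \<Rightarrow> real"
  assumes Q_linear: "\<And>b. linear (\<lambda>a. Q a b)" and Q_sym: "\<And>a b. Q a b = Q b a"
    and diagonal: "\<And>h. \<bar>Q h h\<bar> \<le> M * B h h"
  shows "\<bar>Q a b\<bar> \<le> M * fnorm a * fnorm b"
proof -
  have Q_linear_right: "linear (\<lambda>b. Q a b)" for a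
    using Q_linear[of a] by (subst Q_sym)
  note Q_simps = linear_add[OF Q_linear] linear_add[OF Q_linear_right]
    linear_diff[OF Q_linear] linear_diff[OF Q_linear_right]
    linear_scale[OF Q_linear] linear_scale[OF Q_linear_right]
  show ?thesis
  proof (cases "a = 0 \<or> b = 0")
    case True
    then show ?thesis
      using linear_0[OF Q_linear] linear_0[OF Q_linear_right] by (auto simp: fnorm_def bilinear_simps)
  next
    case False
    define \<alpha> where "\<alpha> = fnorm a"
    define \<beta> where "\<beta> = fnorm b"
    have \<alpha>: "\<alpha> > 0" and \<beta>: "\<beta> > 0"
      using False fnorm_pos unfolding \<alpha>_def \<beta>_def by auto
    define x where "x = \<beta> *\<^sub>R a"
    define y where "y = \<alpha> *\<^sub>R b"
    have "4 * Q x y = Q (x + y) (x + y) - Q (x - y) (x - y)"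
      by (simp add: Q_simps Q_sym[of y x] algebra_simps)
    then have "\<bar>4 * Q x y\<bar> \<le> M * B (x + y) (x + y) + M * B (x - y) (x - y)"
      using diagonal[of "x + y"] diagonal[of "x - y"] by linarith
    also have "\<dots> = 4 * (\<alpha> * \<beta> * (M * \<alpha> * \<beta>))"
      using fnorm_power2[of a] fnorm_power2[of b] unfolding x_def y_def \<alpha>_def \<beta>_def
      by (simp add: bilinear_simps sym[of b a] power2_eq_square algebra_simps)
    finally have "\<bar>Q x y\<bar> \<le> \<alpha> * \<beta> * (M * \<alpha> * \<beta>)" by simp
    moreover have "Q x y = \<alpha> * \<beta> * Q a b"
      unfolding x_def y_def by (simp add: Q_simps)
    ultimately have "\<alpha> * \<beta> * \<bar>Q a b\<bar> \<le> \<alpha> * \<beta> * (M * \<alpha> * \<beta>)"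
      using \<alpha> \<beta> by (simp add: abs_mult)
    then show ?thesis
      using \<alpha> \<beta> unfolding \<alpha>_def \<beta>_def by (simp add: mult_le_cancel_left_pos)
  qed
qed

lemma unit_orthogonal_decomposition:
  assumes u: "B u u = 1" and a: "B a a = 1"
  obtains "a = B u a *\<^sub>R u" "(B u a)\<^sup>2 = 1"
  | v \<mu> where "B v v = 1" "B u v = 0" "a = B u a *\<^sub>R u + \<mu> *\<^sub>R v" "(B u a)\<^sup>2 + \<mu>\<^sup>2 = 1"
proof -
  define w where "w = a - B u a *\<^sub>R u"
  have uw: "B u w = 0"
    unfolding w_def using u by (simp add: bilinear_simps)
  have ww: "B w w = 1 - (B u a)\<^sup>2"
    unfolding w_def using u a by (simp add: bilinear_simps sym[of a u] power2_eq_square)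
  show ?thesis
  proof (cases "w = 0")
    case True
    then show ?thesis
      using that(1) ww unfolding w_def by (simp add: bilinear_simps)
  next
    case False
    define v where "v = w /\<^sub>R fnorm w"
    have "B v v = 1" "B u v = 0" "a = B u a *\<^sub>R u + fnorm w *\<^sub>R v"
      "(B u a)\<^sup>2 + (fnorm w)\<^sup>2 = 1"
      using B_normalized[OF False] uw fnorm_pos[OF False] ww fnorm_power2[of w]
      unfolding v_def w_def by (simp_all add: bilinear_simps)
    then show ?thesis
      using that(2) by blast
  qed
qed

end

locale bounded_sym_trilinear_form = spd_form B for B :: "'a::real_vector \<Rightarrow> 'a \<Rightarrow> real" +
  fixes T :: "'a \<Rightarrow> 'a \<Rightarrow> 'a \<Rightarrow> real" and M :: real
  assumes T_linear: "\<And>b c. linear (\<lambda>a. T a b c)"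
    and T_swap12: "\<And>a b c. T a b c = T b a c"
    and T_swap23: "\<And>a b c. T a b c = T a c b"
    and T_diagonal: "\<And>h. \<bar>T h h h\<bar> \<le> M * fnorm h ^ 3"
begin

lemma T_linear2: "linear (\<lambda>b. T a b c)"
  using T_linear[of a c] by (subst T_swap12)

lemma T_linear3: "linear (\<lambda>c. T a b c)"
  using T_linear2[of a b] by (subst T_swap23)

lemmas T_simps =
  linear_add[OF T_linear] linear_add[OF T_linear2] linear_add[OF T_linear3]
  linear_diff[OF T_linear] linear_diff[OF T_linear2] linear_diff[OF T_linear3]
  linear_scale[OF T_linear] linear_scale[OF T_linear2] linear_scale[OF T_linear3]
  linear_0[OF T_linear] linear_0[OF T_linear2] linear_0[OF T_linear3]

lemma T_cube_expansion:
  "T (x *\<^sub>R u + y *\<^sub>R v) (x *\<^sub>R u + y *\<^sub>R v) (x *\<^sub>R u + y *\<^sub>R v)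
     = binary_cubic (T u u u) (T u u v) (T u v v) (T v v v) x y"
proof -
  have "T u v u = T u u v" "T v u u = T u u v" "T v u v = T u v v" "T v v u = T u v v"
    by (metis T_swap12 T_swap23)+
  then show ?thesis
    unfolding binary_cubic_def
    by (simp add: T_simps) (simp add: power2_eq_square power3_eq_cube algebra_simps)
qed

lemma T_unit_bound:
  assumes u: "B u u = 1" and a: "B a a = 1"
  shows "\<bar>T u u a\<bar> \<le> M"
  using u a
proof (cases rule: unit_orthogonal_decomposition)
  case 1
  then have "T u u a = B u a * T u u u"
    by (metis T_simps(9) real_scaleR_def)
  moreover have "\<bar>B u a\<bar> = 1"
    using 1(2) unfolding power2_eq_1_iff by auto
  moreover have "fnorm u = 1"
    using u unfolding fnorm_def by simp
  ultimately show ?thesis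
    using T_diagonal[of u] by (simp add: abs_mult)
next
  case (2 v \<mu>)
  have "\<bar>B u a * T u u u + \<mu> * T u u v\<bar> \<le> M"
  proof (rule binary_cubic_gradient_bound[where C = "T u v v" and D = "T v v v"])
    show "(B u a)\<^sup>2 + \<mu>\<^sup>2 = 1"
      using 2 by simp
    fix x y :: real
    assume "x\<^sup>2 + y\<^sup>2 = 1"
    moreover have "B (x *\<^sub>R u + y *\<^sub>R v) (x *\<^sub>R u + y *\<^sub>R v) = x\<^sup>2 + y\<^sup>2"
      using u 2 by (simp add: bilinear_simps sym[of v u] power2_eq_square)
    ultimately have "fnorm (x *\<^sub>R u + y *\<^sub>R v) = 1"
      unfolding fnorm_def by simp
    then show "\<bar>binary_cubic (T u u u) (T u u v) (T u v v) (T v v v) x y\<bar> \<le> M"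
      using T_diagonal[of "x *\<^sub>R u + y *\<^sub>R v"] by (simp add: T_cube_expansion)
  qed
  moreover have "T u u a = B u a * T u u u + \<mu> * T u u v"
    by (subst 2(3)) (simp add: T_simps)
  ultimately show ?thesis by simp
qed

lemma T_diagonal_pair_bound: "\<bar>T u u a\<bar> \<le> M * fnorm u ^ 2 * fnorm a"
proof (cases "u = 0 \<or> a = 0")
  case True
  then show ?thesis by (auto simp: T_simps fnorm_def bilinear_simps)
next
  case False
  then have u: "fnorm u > 0" and a: "fnorm a > 0"
    using fnorm_pos by auto
  have "T u u a = fnorm u ^ 2 * fnorm a * T (u /\<^sub>R fnorm u) (u /\<^sub>R fnorm u) (a /\<^sub>R fnorm a)"
    using u a by (simp add: T_simps power2_eq_square field_simps)
  moreover have "\<bar>T (u /\<^sub>R fnorm u) (u /\<^sub>R fnorm u) (a /\<^sub>R fnorm a)\<bar> \<le> M"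
    using T_unit_bound B_normalized False by blast
  ultimately show ?thesis
    using u a by (simp add: abs_mult mult_left_mono)
qed

theorem T_bound: "\<bar>T a b c\<bar> \<le> M * fnorm a * fnorm b * fnorm c"
proof -
  have "\<bar>T a b c\<bar> \<le> (M * fnorm c) * fnorm a * fnorm b"
    using T_linear T_swap12
  proof (rule symmetric_bilinear_bound)
    show "\<bar>T h h c\<bar> \<le> M * fnorm c * B h h" for h
      using T_diagonal_pair_bound[of h c] fnorm_power2[of h] by (simp add: algebra_simps)
  qed
  then show ?thesis by (simp add: algebra_simps)
qed

end

locale bounded_sym_quadrilinear_form = spd_form B for B :: "'a::real_vector \<Rightarrow> 'a \<Rightarrow> real" +
  fixes T :: "'a \<Rightarrow> 'a \<Rightarrow> 'a \<Rightarrow> 'a \<Rightarrow> real" and M :: real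
  assumes T_linear: "\<And>b c d. linear (\<lambda>a. T a b c d)"
    and T_swap12: "\<And>a b c d. T a b c d = T b a c d"
    and T_swap23: "\<And>a b c d. T a b c d = T a c b d"
    and T_swap34: "\<And>a b c d. T a b c d = T a b d c"
    and T_diagonal: "\<And>h. \<bar>T h h h h\<bar> \<le> M * (B h h)\<^sup>2"
begin

lemma T_linear2: "linear (\<lambda>b. T a b c d)"
  using T_linear[of a c d] by (subst T_swap12)

lemma T_linear3: "linear (\<lambda>c. T a b c d)"
  using T_linear2[of a b d] by (subst T_swap23)

lemma T_linear4: "linear (\<lambda>d. T a b c d)"
  using T_linear3[of a b c] by (subst T_swap34)

lemmas T_simps =
  linear_add[OF T_linear] linear_add[OF T_linear2] linear_add[OF T_linear3] linear_add[OF T_linear4]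
  linear_diff[OF T_linear] linear_diff[OF T_linear2] linear_diff[OF T_linear3] linear_diff[OF T_linear4]
  linear_scale[OF T_linear] linear_scale[OF T_linear2] linear_scale[OF T_linear3]
  linear_scale[OF T_linear4]
  linear_0[OF T_linear] linear_0[OF T_linear2] linear_0[OF T_linear3] linear_0[OF T_linear4]

lemma T_sorted:
  "T p p q p = T p p p q" "T p q p p = T p p p q" "T q p p p = T p p p q"
  "T p q p q = T p p q q" "T p q q p = T p p q q" "T q p p q = T p p q q"
  "T q p q p = T p p q q" "T q q p p = T p p q q"
  "T q p q q = T p q q q" "T q q p q = T p q q q" "T q q q p = T p q q q"
  by (metis T_swap12 T_swap23 T_swap34)+

lemma T_quartic_expansion:
  "T (x *\<^sub>R p + y *\<^sub>R q) (x *\<^sub>R p + y *\<^sub>R q) (x *\<^sub>R p + y *\<^sub>R q) (x *\<^sub>R p + y *\<^sub>R q)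
     = x^4 * T p p p p + 4 * x^3 * y * T p p p q + 6 * x^2 * y^2 * T p p q q
       + 4 * x * y^3 * T p q q q + y^4 * T q q q q"
  by (simp add: T_simps T_sorted)
    (simp add: power2_eq_square power3_eq_cube power4_eq_xxxx algebra_simps)

(* With P = B p p and Q = B q q, the vectors sqrt Q p + sqrt P q and sqrt Q p - sqrt P q both
   have B-value 2 P Q, and their quartic values add up to 2 Q^2 T p p p p + 12 P Q T p p q q
   + 2 P^2 T q q q q; this isolates the mixed term. *)
lemma T_orthogonal_bound:
  assumes pq: "B p q = 0"
  shows "\<bar>T p p p p - 2 * T p p q q + T q q q q\<bar> \<le> M * (B p p + B q q)\<^sup>2"
proof -
  define P where "P = B p p"
  define Q where "Q = B q q"
  have bp: "\<bar>T p p p p\<bar> \<le> M * P\<^sup>2" and bq: "\<bar>T q q q q\<bar> \<le> M * Q\<^sup>2"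
    using T_diagonal[of p] T_diagonal[of q] unfolding P_def Q_def .
  show ?thesis
  proof (cases "p = 0 \<or> q = 0")
    case True
    then show ?thesis
      using bp bq unfolding P_def Q_def by (auto simp: T_simps bilinear_simps)
  next
    case False
    then have P: "P > 0" and Q: "Q > 0"
      unfolding P_def Q_def using pos by auto
    define a where "a = sqrt P"
    define b where "b = sqrt Q"
    have a2: "a\<^sup>2 = P" and b2: "b\<^sup>2 = Q"
      unfolding a_def b_def using P Q by simp_all
    have a4: "a^4 = P\<^sup>2" and b4: "b^4 = Q\<^sup>2"
      using a2 b2 by (metis power_mult numeral_Bit0 mult_2 power2_eq_square power_even_eq)+
    define wp where "wp = b *\<^sub>R p + a *\<^sub>R q"
    define wm where "wm = b *\<^sub>R p + (- a) *\<^sub>R q"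
    have "B wp wp = 2 * P * Q" "B wm wm = 2 * P * Q"
      unfolding wp_def wm_def using pq a2 b2
      by (simp_all add: bilinear_simps sym[of q p] P_def[symmetric] Q_def[symmetric]
          power2_eq_square algebra_simps)
    then have bw: "\<bar>T wp wp wp wp + T wm wm wm wm\<bar> \<le> 2 * M * (2 * P * Q)\<^sup>2"
      using T_diagonal[of wp] T_diagonal[of wm] by simp
    have "T wp wp wp wp + T wm wm wm wm
        = 2 * Q\<^sup>2 * T p p p p + 12 * P * Q * T p p q q + 2 * P\<^sup>2 * T q q q q"
      unfolding wp_def wm_def T_quartic_expansion using a2 b2 a4 b4
      by (simp add: power2_eq_square power3_eq_cube power4_eq_xxxx algebra_simps)
    then have "6 * P * Q * (T p p p p - 2 * T p p q q + T q q q q)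
        = (6 * P * Q + 2 * Q\<^sup>2) * T p p p p + (6 * P * Q + 2 * P\<^sup>2) * T q q q q
          - (T wp wp wp wp + T wm wm wm wm)"
      by (simp add: algebra_simps)
    also have "\<bar>\<dots>\<bar> \<le> (6 * P * Q + 2 * Q\<^sup>2) * (M * P\<^sup>2) + (6 * P * Q + 2 * P\<^sup>2) * (M * Q\<^sup>2)
        + 2 * M * (2 * P * Q)\<^sup>2"
    proof -
      have "\<bar>(6 * P * Q + 2 * Q\<^sup>2) * T p p p p\<bar> \<le> (6 * P * Q + 2 * Q\<^sup>2) * (M * P\<^sup>2)"
        "\<bar>(6 * P * Q + 2 * P\<^sup>2) * T q q q q\<bar> \<le> (6 * P * Q + 2 * P\<^sup>2) * (M * Q\<^sup>2)"
        using P Q bp bq by (simp_all add: abs_mult mult_left_mono)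
      then show ?thesis
        using bw by linarith
    qed
    also have "\<dots> = 6 * P * Q * (M * (P + Q)\<^sup>2)"
      by (simp add: power2_eq_square algebra_simps)
    finally show ?thesis
      using P Q unfolding P_def Q_def by (simp add: abs_mult mult_le_cancel_left_pos)
  qed
qed

lemma T_unit_pair_bound:
  assumes u: "B u u = 1" and v: "B v v = 1"
  shows "\<bar>T u u v v\<bar> \<le> M"
proof -
  define p where "p = (1/2) *\<^sub>R (u + v)"
  define q where "q = (1/2) *\<^sub>R (v - u)"
  have "u = p - q" "v = p + q"
    unfolding p_def q_def by (simp_all add: algebra_simps flip: scaleR_add_left)
  then have "T u u v v = T p p p p - 2 * T p p q q + T q q q q"
    by (simp add: T_simps T_sorted)
  moreover have "B p q = 0" "B p p + B q q = 1"
    unfolding p_def q_def using u v by (simp_all add: bilinear_simps sym[of v u] algebra_simps)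
  ultimately show ?thesis
    using T_orthogonal_bound[of p q] by simp
qed

lemma T_pair_bound: "\<bar>T u u v v\<bar> \<le> M * B u u * B v v"
proof (cases "u = 0 \<or> v = 0")
  case True
  then show ?thesis by (auto simp: T_simps bilinear_simps)
next
  case False
  then have u: "fnorm u > 0" and v: "fnorm v > 0"
    using fnorm_pos by auto
  have "T u u v v = fnorm u ^ 2 * fnorm v ^ 2
      * T (u /\<^sub>R fnorm u) (u /\<^sub>R fnorm u) (v /\<^sub>R fnorm v) (v /\<^sub>R fnorm v)"
    using u v by (simp add: T_simps power2_eq_square field_simps)
  moreover have "\<bar>T (u /\<^sub>R fnorm u) (u /\<^sub>R fnorm u) (v /\<^sub>R fnorm v) (v /\<^sub>R fnorm v)\<bar> \<le> M"
    using T_unit_pair_bound B_normalized False by blast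
  ultimately show ?thesis
    using nonneg[of u] nonneg[of v] fnorm_power2[of u] fnorm_power2[of v]
    by (simp add: abs_mult mult_left_mono mult.assoc mult.commute[of M])
qed

theorem T_bound: "\<bar>T a b c c\<bar> \<le> M * fnorm a * fnorm b * B c c"
proof -
  have "\<bar>T a b c c\<bar> \<le> (M * B c c) * fnorm a * fnorm b"
    using T_linear T_swap12
  proof (rule symmetric_bilinear_bound)
    show "\<bar>T h h c c\<bar> \<le> M * B c c * B h h" for h
      using T_pair_bound[of h c] by (simp add: algebra_simps)
  qed
  then show ?thesis by (simp add: algebra_simps)
qed

end

section \<open>Directional derivatives and convexity\<close>

lemma dderiv_dderiv: "dderiv (dderiv f bs) as = dderiv f (as @ bs)"
  by (induction as) auto

lemma frechet_derivative_transform_within_open: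
  assumes "open S" "x \<in> S" "\<And>y. y \<in> S \<Longrightarrow> f y = g y"
  shows "frechet_derivative f (at x) = frechet_derivative g (at x)"
proof -
  have "(f has_derivative f') (at x) \<longleftrightarrow> (g has_derivative f') (at x)" for f'
    using has_derivative_transform_within_open[OF _ assms(1,2), of f f' UNIV g]
      has_derivative_transform_within_open[OF _ assms(1,2), of g f' UNIV f] assms(3)
    by auto
  then show ?thesis
    unfolding frechet_derivative_def by simp
qed

lemma dderiv_cong_on_open:
  assumes "open S" "\<And>y. y \<in> S \<Longrightarrow> f y = g y" "x \<in> S"
  shows "dderiv f hs x = dderiv g hs x"
  using assms(3)
proof (induction hs arbitrary: x)
  case Nil
  then show ?case using assms(2) by simp
next
  case (Cons h hs)
  then show ?case
    using frechet_derivative_transform_within_open[OF assms(1) Cons.prems Cons.IH] by simp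
qed

lemma has_derivative_dderiv_line:
  fixes f :: "'a::real_normed_vector \<Rightarrow> real"
  assumes "f differentiable (at (p + s *\<^sub>R v))"
  shows "((\<lambda>s. f (p + s *\<^sub>R v)) has_derivative (\<lambda>d. d * dderiv f [v] (p + s *\<^sub>R v))) (at s within X)"
proof -
  have line: "((\<lambda>s. p + s *\<^sub>R v) has_derivative (\<lambda>d. d *\<^sub>R v)) (at s within X)"
    by (auto intro!: derivative_eq_intros)
  have "((\<lambda>s. f (p + s *\<^sub>R v)) has_derivative (\<lambda>d. frechet_derivative f (at (p + s *\<^sub>R v)) (d *\<^sub>R v)))
      (at s within X)"
    using has_derivative_compose[OF line] assms frechet_derivative_works by blast
  moreover have "frechet_derivative f (at (p + s *\<^sub>R v)) (d *\<^sub>R v) = d * dderiv f [v] (p + s *\<^sub>R v)" for d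
    using linear_scale[OF linear_frechet_derivative[OF assms], of d v] by simp
  ultimately show ?thesis by simp
qed

lemma has_real_derivative_dderiv_line:
  fixes f :: "'a::real_normed_vector \<Rightarrow> real"
  assumes "f differentiable (at (p + s *\<^sub>R v))"
  shows "((\<lambda>s. f (p + s *\<^sub>R v)) has_real_derivative dderiv f [v] (p + s *\<^sub>R v)) (at s within X)"
  using has_derivative_dderiv_line[OF assms, of X]
  unfolding has_field_derivative_def by (simp add: mult.commute[of _ "frechet_derivative f _ v"])

lemma second_difference_mvt:
  fixes g :: "'a::real_normed_vector \<Rightarrow> real"
  assumes t: "t > 0"
    and square: "\<And>a b. 0 \<le> a \<Longrightarrow> a \<le> t \<Longrightarrow> 0 \<le> b \<Longrightarrow> b \<le> t \<Longrightarrow> x + a *\<^sub>R u + b *\<^sub>R w \<in> S"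
    and dg: "\<And>y. y \<in> S \<Longrightarrow> g differentiable (at y)"
    and du: "\<And>y. y \<in> S \<Longrightarrow> dderiv g [u] differentiable (at y)"
  obtains a b where "0 \<le> a" "a \<le> t" "0 \<le> b" "b \<le> t"
    "g (x + t *\<^sub>R u + t *\<^sub>R w) - g (x + t *\<^sub>R u) - g (x + t *\<^sub>R w) + g x
       = t\<^sup>2 * dderiv g [w, u] (x + a *\<^sub>R u + b *\<^sub>R w)"
proof -
  define f1 where "f1 = (\<lambda>s. g ((x + t *\<^sub>R w) + s *\<^sub>R u) - g (x + s *\<^sub>R u))"
  have "\<exists>s\<in>{0..t}. f1 t - f1 0 = (\<lambda>s d. d * (dderiv g [u] ((x + t *\<^sub>R w) + s *\<^sub>R u)
      - dderiv g [u] (x + s *\<^sub>R u))) s (t - 0)"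
  proof (rule mvt_very_simple)
    fix s assume s: "0 \<le> s" "s \<le> t"
    have "(x + t *\<^sub>R w) + s *\<^sub>R u \<in> S" "x + s *\<^sub>R u \<in> S"
      using square[of s t] square[of s 0] s t by (simp_all add: algebra_simps)
    then have "(f1 has_derivative (\<lambda>d. d * dderiv g [u] ((x + t *\<^sub>R w) + s *\<^sub>R u)
        - d * dderiv g [u] (x + s *\<^sub>R u))) (at s within {0..t})"
      unfolding f1_def by (intro has_derivative_diff has_derivative_dderiv_line dg)
    then show "(f1 has_derivative (\<lambda>d. d * (dderiv g [u] ((x + t *\<^sub>R w) + s *\<^sub>R u)
        - dderiv g [u] (x + s *\<^sub>R u)))) (at s within {0..t})"
      by (simp add: algebra_simps)
  qed (use t in simp)
  then obtain a where a: "0 \<le> a" "a \<le> t"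
    and ea: "f1 t - f1 0 = t * (dderiv g [u] ((x + a *\<^sub>R u) + t *\<^sub>R w) - dderiv g [u] ((x + a *\<^sub>R u) + 0 *\<^sub>R w))"
    by (auto simp: algebra_simps)
  define f2 where "f2 = (\<lambda>r. dderiv g [u] ((x + a *\<^sub>R u) + r *\<^sub>R w))"
  have "\<exists>r\<in>{0..t}. f2 t - f2 0 = (\<lambda>r d. d * dderiv (dderiv g [u]) [w] ((x + a *\<^sub>R u) + r *\<^sub>R w)) r (t - 0)"
  proof (rule mvt_very_simple)
    fix r assume "0 \<le> r" "r \<le> t"
    then have "(x + a *\<^sub>R u) + r *\<^sub>R w \<in> S"
      using square[OF a] by simp
    then show "(f2 has_derivative (\<lambda>d. d * dderiv (dderiv g [u]) [w] ((x + a *\<^sub>R u) + r *\<^sub>R w)))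
        (at r within {0..t})"
      unfolding f2_def by (intro has_derivative_dderiv_line du)
  qed (use t in simp)
  then obtain b where b: "0 \<le> b" "b \<le> t"
    and eb: "f2 t - f2 0 = t * dderiv g [w, u] (x + a *\<^sub>R u + b *\<^sub>R w)"
    by (auto simp: dderiv_dderiv)
  have "g (x + t *\<^sub>R u + t *\<^sub>R w) - g (x + t *\<^sub>R u) - g (x + t *\<^sub>R w) + g x = f1 t - f1 0"
    unfolding f1_def by (simp add: algebra_simps)
  also have "\<dots> = t * (f2 t - f2 0)"
    unfolding ea f2_def by simp
  also have "\<dots> = t\<^sup>2 * dderiv g [w, u] (x + a *\<^sub>R u + b *\<^sub>R w)"
    unfolding eb by (simp add: power2_eq_square)
  finally show ?thesis
    using that a b by blast
qed

lemma dist_square_le: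
  fixes x u w :: "'a::real_normed_vector"
  assumes "0 \<le> a" "a \<le> t" "0 \<le> b" "b \<le> t"
  shows "dist (x + a *\<^sub>R u + b *\<^sub>R w) x \<le> t * (norm u + norm w)"
proof -
  have "dist (x + a *\<^sub>R u + b *\<^sub>R w) x \<le> a * norm u + b * norm w"
    using assms norm_triangle_ineq[of "a *\<^sub>R u" "b *\<^sub>R w"] by (simp add: dist_norm)
  also have "\<dots> \<le> t * norm u + t * norm w"
    using assms by (intro add_mono mult_right_mono) auto
  finally show ?thesis
    by (simp add: algebra_simps)
qed

theorem dderiv_swap:
  fixes g :: "'a::real_normed_vector \<Rightarrow> real"
  assumes S: "open S" and x: "x \<in> S"
    and dg: "\<And>y. y \<in> S \<Longrightarrow> g differentiable (at y)"
    and du: "\<And>y. y \<in> S \<Longrightarrow> dderiv g [u] differentiable (at y)"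
    and dw: "\<And>y. y \<in> S \<Longrightarrow> dderiv g [w] differentiable (at y)"
    and cu: "continuous_on S (dderiv g [w, u])" and cw: "continuous_on S (dderiv g [u, w])"
  shows "dderiv g [w, u] x = dderiv g [u, w] x"
proof (rule ccontr)
  assume ne: "dderiv g [w, u] x \<noteq> dderiv g [u, w] x"
  define e where "e = \<bar>dderiv g [w, u] x - dderiv g [u, w] x\<bar> / 2"
  have e: "e > 0" using ne unfolding e_def by simp
  have "isCont (dderiv g [w, u]) x" "isCont (dderiv g [u, w]) x"
    using cu cw S x continuous_on_eq_continuous_at by blast+
  then obtain d1 d2 where
    d1: "d1 > 0" "\<And>z. dist z x < d1 \<Longrightarrow> dist (dderiv g [w, u] z) (dderiv g [w, u] x) < e" and
    d2: "d2 > 0" "\<And>z. dist z x < d2 \<Longrightarrow> dist (dderiv g [u, w] z) (dderiv g [u, w] x) < e"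
    using e unfolding continuous_at_eps_delta by blast
  obtain d0 where d0: "d0 > 0" "ball x d0 \<subseteq> S"
    using S x open_contains_ball by blast
  define d where "d = min d0 (min d1 d2)"
  define t where "t = d / (2 * (norm u + norm w + 1))"
  have t: "t > 0"
    unfolding t_def d_def using d0 d1 d2 by (simp add: add_nonneg_pos)
  have "t * (norm u + norm w) < t * (2 * (norm u + norm w + 1))"
    using t by (smt (verit) mult_strict_left_mono norm_ge_zero)
  also have "\<dots> = d"
    unfolding t_def by (smt (verit) nonzero_eq_divide_eq norm_ge_zero)
  finally have "t * (norm u + norm w) < d" .
  then have close: "dist (x + a *\<^sub>R u + b *\<^sub>R w) x < d"
    if "0 \<le> a" "a \<le> t" "0 \<le> b" "b \<le> t" for a b
    using dist_square_le[OF that, of x u w] by linarith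
  have square: "x + a *\<^sub>R u + b *\<^sub>R w \<in> S"
    if "0 \<le> a" "a \<le> t" "0 \<le> b" "b \<le> t" for a b
    using close[OF that] d0(2) unfolding d_def by (auto simp: dist_commute)
  have square': "x + a *\<^sub>R w + b *\<^sub>R u \<in> S"
    if "0 \<le> a" "a \<le> t" "0 \<le> b" "b \<le> t" for a b
    using square[of b a] that by (simp add: ac_simps)
  obtain a1 b1 where ab1: "0 \<le> a1" "a1 \<le> t" "0 \<le> b1" "b1 \<le> t"
    and E1: "g (x + t *\<^sub>R u + t *\<^sub>R w) - g (x + t *\<^sub>R u) - g (x + t *\<^sub>R w) + g x
      = t\<^sup>2 * dderiv g [w, u] (x + a1 *\<^sub>R u + b1 *\<^sub>R w)"
    using second_difference_mvt[OF t square dg du] by blast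
  obtain a2 b2 where ab2: "0 \<le> a2" "a2 \<le> t" "0 \<le> b2" "b2 \<le> t"
    and E2: "g (x + t *\<^sub>R w + t *\<^sub>R u) - g (x + t *\<^sub>R w) - g (x + t *\<^sub>R u) + g x
      = t\<^sup>2 * dderiv g [u, w] (x + a2 *\<^sub>R w + b2 *\<^sub>R u)"
    using second_difference_mvt[OF t square' dg dw] by blast
  have "dderiv g [w, u] (x + a1 *\<^sub>R u + b1 *\<^sub>R w) = dderiv g [u, w] (x + a2 *\<^sub>R w + b2 *\<^sub>R u)"
    using E1 E2 t by (simp add: algebra_simps)
  moreover have "dist (dderiv g [w, u] (x + a1 *\<^sub>R u + b1 *\<^sub>R w)) (dderiv g [w, u] x) < e"
    using d1(2) close[OF ab1] unfolding d_def by simp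
  moreover have "dist (dderiv g [u, w] (x + a2 *\<^sub>R w + b2 *\<^sub>R u)) (dderiv g [u, w] x) < e"
    using d2(2) close[OF ab2(3,4,1,2)] unfolding d_def by (simp add: algebra_simps)
  moreover have "\<And>A B C D :: real. \<bar>A - C\<bar> < \<bar>C - D\<bar> / 2 \<Longrightarrow> \<bar>B - D\<bar> < \<bar>C - D\<bar> / 2 \<Longrightarrow> A \<noteq> B"
    by (simp add: abs_if split: if_splits)
  ultimately show False
    unfolding e_def dist_real_def by blast
qed

lemma convex_on_along_line:
  assumes "convex_on K f"
  shows "convex_on {s. z + s *\<^sub>R h \<in> K} (\<lambda>s. f (z + s *\<^sub>R h))"
proof -
  have comb: "z + (u * a + v * b) *\<^sub>R h = u *\<^sub>R (z + a *\<^sub>R h) + v *\<^sub>R (z + b *\<^sub>R h)"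
    if "u + v = 1" for u v a b
    using that by (simp add: algebra_simps flip: scaleR_add_left)
  show ?thesis
  proof (rule convex_onI)
    show "convex {s. z + s *\<^sub>R h \<in> K}"
      using convexD[OF convex_on_imp_convex[OF assms]] by (intro convexI) (simp add: comb)
    fix t a b :: real
    assume "0 < t" "t < 1" "a \<in> {s. z + s *\<^sub>R h \<in> K}" "b \<in> {s. z + s *\<^sub>R h \<in> K}"
    then show "f (z + ((1 - t) *\<^sub>R a + t *\<^sub>R b) *\<^sub>R h) \<le> (1 - t) * f (z + a *\<^sub>R h) + t * f (z + b *\<^sub>R h)"
      using convex_onD[OF assms, of t] by (simp add: comb)
  qed
qed

lemma convex_on_second_derivative_nonneg:
  fixes f :: "real \<Rightarrow> real"
  assumes convex: "convex_on I f" and I: "open I" and c: "c \<in> I"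
    and f': "\<And>s. s \<in> I \<Longrightarrow> (f has_real_derivative f' s) (at s)"
    and f'': "(f' has_real_derivative f'') (at c)"
  shows "f'' \<ge> 0"
proof (rule ccontr)
  assume "\<not> f'' \<ge> 0"
  then obtain d1 where d1: "d1 > 0" "\<And>s. s > 0 \<Longrightarrow> s < d1 \<Longrightarrow> f' (c + s) < f' c"
    using DERIV_neg_dec_right[OF f''] by force
  obtain d0 where d0: "d0 > 0" "ball c d0 \<subseteq> I"
    using I c open_contains_ball by blast
  define s where "s = min d0 d1 / 2"
  have s: "s > 0" "s < d1"
    unfolding s_def using d0 d1 by auto
  have "c + s \<in> ball c d0"
    unfolding s_def using d0 d1 by (simp add: dist_norm)
  then have "c + s \<in> I"
    using d0(2) by blast
  note s = s this
  have tangent: "f x - f y \<ge> f' y * (x - y)" if "x \<in> I" "y \<in> I" for x y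
    using convex_on_imp_above_tangent[OF convex convex_connected[OF convex_on_imp_convex[OF convex]] _ that(1)]
      f'[OF that(2)] interior_open[OF I] that(2)
    by (simp add: has_field_derivative_at_within)
  have "f (c + s) - f c \<ge> f' c * s" "f c - f (c + s) \<ge> f' (c + s) * (- s)"
    using tangent[OF s(3) c] tangent[OF c s(3)] by simp_all
  then have "s * (f' (c + s) - f' c) \<ge> 0"
    by (simp add: algebra_simps)
  then show False
    using d1(2)[OF s(1,2)] s(1) by (simp add: zero_le_mult_iff)
qed

section \<open>Local norms of a highly self-concordant barrier\<close>

lemma linear_axis_expansion:
  fixes F :: "real^'n \<Rightarrow> real"
  assumes "linear F"
  shows "F h = (\<Sum>i\<in>UNIV. h $ i * F (axis i 1))"
proof -
  have "F h = F (\<Sum>i\<in>UNIV. h $ i *\<^sub>R axis i 1)"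
    using basis_expansion[of h] by (simp add: scalar_mult_eq_scaleR)
  also have "\<dots> = (\<Sum>i\<in>UNIV. h $ i * F (axis i 1))"
    by (simp add: linear_sum[OF assms] linear_scale[OF assms])
  finally show ?thesis .
qed

lemma inner_vec_of_linear:
  fixes F :: "real^'n \<Rightarrow> real"
  assumes "linear F"
  shows "(\<chi> i. F (axis i 1)) \<bullet> q = F q"
  unfolding linear_axis_expansion[OF assms, of q] inner_vec_def by (simp add: mult.commute)

lemma linear_coefficient_zero:
  fixes a b :: real
  assumes b: "b \<ge> 0" and nonneg: "\<And>t. 2 * t * a + t\<^sup>2 * b \<ge> 0"
  shows "a = 0"
proof (rule ccontr)
  assume "a \<noteq> 0"
  define t where "t = - a / (b + 1)"
  have et: "(b + 1) * t = - a"
    unfolding t_def using b by simp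
  have "(b + 1)\<^sup>2 * (2 * t * a + t\<^sup>2 * b) = 2 * (b + 1) * ((b + 1) * t) * a + ((b + 1) * t)\<^sup>2 * b"
    by (simp add: power2_eq_square algebra_simps)
  also have "\<dots> = - (a\<^sup>2 * (b + 2))"
    unfolding et by (simp add: power2_eq_square algebra_simps)
  also have "\<dots> < 0"
    using \<open>a \<noteq> 0\<close> b by (simp add: add_nonneg_pos)
  finally show False
    using nonneg[of t] b by (simp add: mult_less_0_iff)
qed

declare dderiv.simps(2)[simp del]

locale highly_self_concordant =
  fixes K :: "(real^'n) set" and \<phi> :: "real^'n \<Rightarrow> real"
  assumes open_K: "open K" and convex_K: "convex K" and barrier: "hsc_barrier K \<phi>"
begin

lemma dderiv_differentiable: "length hs < 4 \<Longrightarrow> x \<in> K \<Longrightarrow> dderiv \<phi> hs differentiable (at x)"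
  using barrier unfolding hsc_barrier_def C_k_on_def by blast

lemma dderiv_continuous_on:
  assumes "length hs \<le> 4"
  shows "continuous_on K (dderiv \<phi> hs)"
proof (cases "length hs = 4")
  case True
  then show ?thesis
    using barrier unfolding hsc_barrier_def C_k_on_def by blast
next
  case False
  with assms show ?thesis
    by (intro continuous_at_imp_continuous_on ballI differentiable_imp_continuous_within
        dderiv_differentiable) simp_all
qed

lemma linear_dderiv: "length hs < 4 \<Longrightarrow> x \<in> K \<Longrightarrow> linear (\<lambda>h. dderiv \<phi> (h # hs) x)"
  using linear_frechet_derivative[OF dderiv_differentiable[of hs x]] by (simp add: dderiv.simps)

lemma dderiv_swap_front:
  assumes "length post \<le> 2" "x \<in> K"
  shows "dderiv \<phi> (a # b # post) x = dderiv \<phi> (b # a # post) x"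
proof -
  have "dderiv (dderiv \<phi> post) [a, b] x = dderiv (dderiv \<phi> post) [b, a] x"
  proof (rule dderiv_swap[OF open_K assms(2)])
    show "dderiv \<phi> post differentiable (at z)" if "z \<in> K" for z
      using dderiv_differentiable that assms by simp
    show "dderiv (dderiv \<phi> post) [b] differentiable (at z)" if "z \<in> K" for z
      unfolding dderiv_dderiv using dderiv_differentiable[of "b # post" z] that assms by simp
    show "dderiv (dderiv \<phi> post) [a] differentiable (at z)" if "z \<in> K" for z
      unfolding dderiv_dderiv using dderiv_differentiable[of "a # post" z] that assms by simp
    show "continuous_on K (dderiv (dderiv \<phi> post) [a, b])" "continuous_on K (dderiv (dderiv \<phi> post) [b, a])"
      unfolding dderiv_dderiv using dderiv_continuous_on assms by simp_all
  qed
  then show ?thesis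
    unfolding dderiv_dderiv by simp
qed

lemma dderiv_swap_adjacent:
  assumes "length pre + length post \<le> 2" "x \<in> K"
  shows "dderiv \<phi> (pre @ a # b # post) x = dderiv \<phi> (pre @ b # a # post) x"
proof -
  have "dderiv (dderiv \<phi> (a # b # post)) pre x = dderiv (dderiv \<phi> (b # a # post)) pre x"
    by (rule dderiv_cong_on_open[OF open_K _ assms(2)]) (use dderiv_swap_front assms in simp)
  then show ?thesis
    unfolding dderiv_dderiv .
qed

lemma hessian_linear: "z \<in> K \<Longrightarrow> linear (\<lambda>a. dderiv \<phi> [a, b] z)"
  using linear_dderiv[of "[b]" z] by simp

lemma hessian_sym: "z \<in> K \<Longrightarrow> dderiv \<phi> [a, b] z = dderiv \<phi> [b, a] z"
  using dderiv_swap_adjacent[of "[]" "[]" z a b] by simp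

lemma hessian_linear_right: "z \<in> K \<Longrightarrow> linear (\<lambda>b. dderiv \<phi> [a, b] z)"
  using hessian_linear[of z a] by (subst hessian_sym) auto

lemma hess_mult_vec: "z \<in> K \<Longrightarrow> hess \<phi> z *v h = (\<chi> i. dderiv \<phi> [axis i 1, h] z)"
  unfolding hess_def matrix_vector_mult_def vec_eq_iff
  by (simp add: linear_axis_expansion[OF hessian_linear_right, of z _ h] mult.commute)

lemma inner_hess: "z \<in> K \<Longrightarrow> h \<bullet> (hess \<phi> z *v h) = dderiv \<phi> [h, h] z"
  unfolding hess_mult_vec by (subst inner_commute) (rule inner_vec_of_linear[OF hessian_linear])

lemma lnorm_hess: "z \<in> K \<Longrightarrow> lnorm (hess \<phi> z) h = sqrt (dderiv \<phi> [h, h] z)"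
  unfolding lnorm_def inner_hess ..

lemma hessian_nonneg:
  assumes z: "z \<in> K"
  shows "dderiv \<phi> [h, h] z \<ge> 0"
proof -
  define I where "I = {s. z + s *\<^sub>R h \<in> K}"
  have "continuous_on UNIV (\<lambda>s::real. z + s *\<^sub>R h)"
    by (intro continuous_intros)
  then have "open ((\<lambda>s. z + s *\<^sub>R h) -` K \<inter> UNIV)"
    using continuous_on_open_vimage[of UNIV "\<lambda>s::real. z + s *\<^sub>R h"] open_K by blast
  then have "open I"
    unfolding I_def by (simp add: vimage_def)
  moreover have "convex_on I (\<lambda>s. \<phi> (z + s *\<^sub>R h))"
    unfolding I_def using barrier by (intro convex_on_along_line) (simp add: hsc_barrier_def)
  moreover have "((\<lambda>s. \<phi> (z + s *\<^sub>R h)) has_real_derivative dderiv \<phi> [h] (z + s *\<^sub>R h)) (at s)"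
    if "s \<in> I" for s
    using that dderiv_differentiable[of "[]"]
    unfolding I_def by (intro has_real_derivative_dderiv_line) simp
  moreover have "((\<lambda>s. dderiv \<phi> [h] (z + s *\<^sub>R h)) has_real_derivative dderiv \<phi> [h, h] z) (at 0)"
    using has_real_derivative_dderiv_line[of "dderiv \<phi> [h]" z 0 h] dderiv_differentiable[of "[h]" z] z
    by (simp add: dderiv_dderiv)
  ultimately show ?thesis
    using z unfolding I_def by (intro convex_on_second_derivative_nonneg) auto
qed

lemma hessian_pos:
  assumes z: "z \<in> K" and h: "h \<noteq> 0"
  shows "dderiv \<phi> [h, h] z > 0"
proof (rule ccontr)
  assume "\<not> dderiv \<phi> [h, h] z > 0"
  then have h0: "dderiv \<phi> [h, h] z = 0"
    using hessian_nonneg[OF z, of h] by simp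
  have "dderiv \<phi> [k, h] z = 0" for k
  proof (rule linear_coefficient_zero)
    show "dderiv \<phi> [k, k] z \<ge> 0"
      using hessian_nonneg[OF z] .
    fix t
    have "dderiv \<phi> [h + t *\<^sub>R k, h + t *\<^sub>R k] z = 2 * t * dderiv \<phi> [k, h] z + t\<^sup>2 * dderiv \<phi> [k, k] z"
      using h0 hessian_sym[OF z, of h k]
      by (simp add: linear_add[OF hessian_linear[OF z]] linear_add[OF hessian_linear_right[OF z]]
          linear_scale[OF hessian_linear[OF z]] linear_scale[OF hessian_linear_right[OF z]]
          power2_eq_square algebra_simps)
    then show "2 * t * dderiv \<phi> [k, h] z + t\<^sup>2 * dderiv \<phi> [k, k] z \<ge> 0"
      using hessian_nonneg[OF z, of "h + t *\<^sub>R k"] by simp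
  qed
  then have "hess \<phi> z *v h = 0"
    unfolding hess_mult_vec[OF z] by (simp add: vec_eq_iff)
  moreover obtain A' where "A' ** hess \<phi> z = mat 1"
    using barrier z unfolding hsc_barrier_def invertible_def by blast
  ultimately have "h = 0"
    by (metis matrix_vector_mul_assoc matrix_vector_mul_lid matrix_vector_mult_0_right)
  then show False
    using h by simp
qed

lemma lnorm_hess_nonneg: "z \<in> K \<Longrightarrow> lnorm (hess \<phi> z) h \<ge> 0"
  unfolding lnorm_hess using hessian_nonneg by simp

lemma lnorm_hess_power2: "z \<in> K \<Longrightarrow> (lnorm (hess \<phi> z) h)\<^sup>2 = dderiv \<phi> [h, h] z"
  unfolding lnorm_hess using hessian_nonneg by simp

lemma spd_hessian: "z \<in> K \<Longrightarrow> spd_form (\<lambda>a b. dderiv \<phi> [a, b] z)"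
  by (intro spd_form.intro hessian_linear hessian_sym hessian_pos)

lemma hessian_fnorm: "z \<in> K \<Longrightarrow> spd_form.fnorm (\<lambda>a b. dderiv \<phi> [a, b] z) h = sqrt (dderiv \<phi> [h, h] z)"
  using spd_form.fnorm_def[OF spd_hessian] .

lemma powr_three_halves:
  fixes x :: real
  assumes "x \<ge> 0"
  shows "x powr (3/2) = sqrt x ^ 3"
proof -
  have "x powr (3/2) = x powr 1 * x powr (1/2)"
    using powr_add[of x 1 "1/2"] by simp
  also have "\<dots> = sqrt x ^ 2 * sqrt x"
    using assms by (cases "x = 0") (simp_all add: powr_half_sqrt)
  finally show ?thesis
    by (simp add: power3_eq_cube power2_eq_square)
qed

lemma bounded_sym_trilinear_third_dderiv:
  assumes z: "z \<in> K"
  shows "bounded_sym_trilinear_form (\<lambda>a b. dderiv \<phi> [a, b] z) (\<lambda>a b c. dderiv \<phi> [a, b, c] z) 2"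
proof (intro bounded_sym_trilinear_form.intro bounded_sym_trilinear_form_axioms.intro spd_hessian[OF z])
  show "linear (\<lambda>a. dderiv \<phi> [a, b, c] z)" for b c
    using linear_dderiv[of "[b, c]" z] z by simp
  show "dderiv \<phi> [a, b, c] z = dderiv \<phi> [b, a, c] z" for a b c
    using dderiv_swap_adjacent[of "[]" "[c]" z a b] z by simp
  show "dderiv \<phi> [a, b, c] z = dderiv \<phi> [a, c, b] z" for a b c
    using dderiv_swap_adjacent[of "[a]" "[]" z b c] z by simp
  show "\<bar>dderiv \<phi> [h, h, h] z\<bar> \<le> 2 * spd_form.fnorm (\<lambda>a b. dderiv \<phi> [a, b] z) h ^ 3" for h
  proof -
    have "\<bar>dderiv \<phi> [h, h, h] z\<bar> \<le> 2 * dderiv \<phi> [h, h] z powr (3/2)"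
      using barrier z unfolding hsc_barrier_def by blast
    then show ?thesis
      unfolding hessian_fnorm[OF z] powr_three_halves[OF hessian_nonneg[OF z]] .
  qed
qed

lemma bounded_sym_quadrilinear_fourth_dderiv:
  assumes z: "z \<in> K"
  shows "bounded_sym_quadrilinear_form (\<lambda>a b. dderiv \<phi> [a, b] z)
    (\<lambda>a b c d. dderiv \<phi> [a, b, c, d] z) 6"
proof (intro bounded_sym_quadrilinear_form.intro bounded_sym_quadrilinear_form_axioms.intro
    spd_hessian[OF z])
  show "linear (\<lambda>a. dderiv \<phi> [a, b, c, d] z)" for b c d
    using linear_dderiv[of "[b, c, d]" z] z by simp
  show "dderiv \<phi> [a, b, c, d] z = dderiv \<phi> [b, a, c, d] z" for a b c d
    using dderiv_swap_adjacent[of "[]" "[c, d]" z a b] z by simp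
  show "dderiv \<phi> [a, b, c, d] z = dderiv \<phi> [a, c, b, d] z" for a b c d
    using dderiv_swap_adjacent[of "[a]" "[d]" z b c] z by simp
  show "dderiv \<phi> [a, b, c, d] z = dderiv \<phi> [a, b, d, c] z" for a b c d
    using dderiv_swap_adjacent[of "[a, b]" "[]" z c d] z by simp
  show "\<bar>dderiv \<phi> [h, h, h, h] z\<bar> \<le> 6 * (dderiv \<phi> [h, h] z)\<^sup>2" for h
    using barrier z unfolding hsc_barrier_def by blast
qed

theorem third_dderiv_bound:
  assumes z: "z \<in> K"
  shows "\<bar>dderiv \<phi> [a, b, c] z\<bar>
    \<le> 2 * lnorm (hess \<phi> z) a * lnorm (hess \<phi> z) b * lnorm (hess \<phi> z) c"
proof -
  interpret bounded_sym_trilinear_form "\<lambda>a b. dderiv \<phi> [a, b] z" "\<lambda>a b c. dderiv \<phi> [a, b, c] z" 2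
    by (rule bounded_sym_trilinear_third_dderiv[OF z])
  show ?thesis
    using T_bound unfolding fnorm_def lnorm_hess[OF z] .
qed

theorem fourth_dderiv_bound:
  assumes z: "z \<in> K"
  shows "\<bar>dderiv \<phi> [a, b, c, c] z\<bar>
    \<le> 6 * lnorm (hess \<phi> z) a * lnorm (hess \<phi> z) b * (lnorm (hess \<phi> z) c)\<^sup>2"
proof -
  interpret bounded_sym_quadrilinear_form "\<lambda>a b. dderiv \<phi> [a, b] z"
      "\<lambda>a b c d. dderiv \<phi> [a, b, c, d] z" 6
    by (rule bounded_sym_quadrilinear_fourth_dderiv[OF z])
  show ?thesis
    using T_bound hessian_nonneg[OF z, of c] unfolding fnorm_def lnorm_hess[OF z] by simp
qed

end

section \<open>Along a segment inside the Dikin ellipsoid\<close>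

lemma inverse_sqrt_decrease_bound:
  fixes \<sigma> \<sigma>' :: "real \<Rightarrow> real"
  assumes t: "0 \<le> t"
    and deriv: "\<And>s. 0 \<le> s \<Longrightarrow> s \<le> t \<Longrightarrow> (\<sigma> has_real_derivative \<sigma>' s) (at s)"
    and pos: "\<And>s. 0 \<le> s \<Longrightarrow> s \<le> t \<Longrightarrow> \<sigma> s > 0"
    and bound: "\<And>s. 0 \<le> s \<Longrightarrow> s \<le> t \<Longrightarrow> \<bar>\<sigma>' s\<bar> \<le> 2 * sqrt (\<sigma> s) ^ 3"
  shows "inverse (sqrt (\<sigma> 0)) \<le> inverse (sqrt (\<sigma> t)) + t"
proof -
  define F where "F = (\<lambda>s. inverse (sqrt (\<sigma> s)) + s)"
  have "F 0 \<le> F t"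
  proof (rule DERIV_nonneg_imp_nondecreasing[OF t])
    fix s
    assume s: "0 \<le> s" "s \<le> t"
    define q where "q = sqrt (\<sigma> s)"
    have q: "q > 0"
      unfolding q_def using pos[OF s] by simp
    have "(F has_real_derivative 1 - \<sigma>' s / (2 * q ^ 3)) (at s)"
    proof -
      have "(F has_real_derivative - (inverse q * (inverse q / 2 * \<sigma>' s) * inverse q) + 1) (at s)"
        unfolding F_def q_def using pos[OF s]
        by (intro DERIV_add DERIV_inverse' DERIV_chain2[OF DERIV_real_sqrt deriv[OF s]] DERIV_ident)
          simp_all
      moreover have "- (inverse q * (inverse q / 2 * \<sigma>' s) * inverse q) + 1 = 1 - \<sigma>' s / (2 * q ^ 3)"
        using q by (simp add: field_simps power3_eq_cube)
      ultimately show ?thesis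
        by (simp only:)
    qed
    moreover have "\<sigma>' s / (2 * q ^ 3) \<le> 1"
      using bound[OF s] q unfolding q_def[symmetric] by (simp add: divide_le_eq abs_le_iff)
    ultimately show "\<exists>y. (F has_real_derivative y) (at s) \<and> 0 \<le> y"
      by auto
  qed
  then show ?thesis
    unfolding F_def by simp
qed

lemma damped_growth_bound:
  fixes \<psi> \<psi>' :: "real \<Rightarrow> real"
  assumes t: "0 \<le> t" and r: "0 \<le> r" "t * r < 1"
    and deriv: "\<And>s. 0 \<le> s \<Longrightarrow> s \<le> t \<Longrightarrow> (\<psi> has_real_derivative \<psi>' s) (at s)"
    and nonneg: "\<And>s. 0 \<le> s \<Longrightarrow> s \<le> t \<Longrightarrow> \<psi> s \<ge> 0"
    and bound: "\<And>s. 0 \<le> s \<Longrightarrow> s \<le> t \<Longrightarrow> \<psi>' s * (1 - s * r) \<le> 2 * r * \<psi> s"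
  shows "\<psi> t * (1 - t * r)\<^sup>2 \<le> \<psi> 0"
proof -
  define G where "G = (\<lambda>s. \<psi> s * (1 - s * r)\<^sup>2)"
  have "G t \<le> G 0"
  proof (rule DERIV_nonpos_imp_nonincreasing[OF t])
    fix s
    assume s: "0 \<le> s" "s \<le> t"
    have "((\<lambda>s. (1 - s * r)\<^sup>2) has_real_derivative 2 * (1 - s * r) * (- r)) (at s)"
      by (auto intro!: derivative_eq_intros)
    then have "(G has_real_derivative \<psi>' s * (1 - s * r)\<^sup>2 + 2 * (1 - s * r) * (- r) * \<psi> s) (at s)"
      unfolding G_def by (rule DERIV_mult[OF deriv[OF s]])
    moreover have "\<psi>' s * (1 - s * r)\<^sup>2 + 2 * (1 - s * r) * (- r) * \<psi> s
        = (1 - s * r) * (\<psi>' s * (1 - s * r) - 2 * r * \<psi> s)"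
      by (simp add: power2_eq_square algebra_simps)
    moreover have "s * r \<le> t * r"
      using s r by (intro mult_right_mono) auto
    then have "1 - s * r \<ge> 0"
      using r by simp
    ultimately show "\<exists>y. (G has_real_derivative y) (at s) \<and> y \<le> 0"
      using bound[OF s] by (metis diff_le_0_iff_le mult_nonneg_nonpos)
  qed
  then show ?thesis
    unfolding G_def by simp
qed

lemma abs_diff_le_dominating_derivative:
  fixes k k' \<Phi> \<Phi>' :: "real \<Rightarrow> real"
  assumes "a \<le> b"
    and "\<And>s. a \<le> s \<Longrightarrow> s \<le> b \<Longrightarrow> (k has_real_derivative k' s) (at s)"
    and "\<And>s. a \<le> s \<Longrightarrow> s \<le> b \<Longrightarrow> (\<Phi> has_real_derivative \<Phi>' s) (at s)"
    and "\<And>s. a \<le> s \<Longrightarrow> s \<le> b \<Longrightarrow> \<bar>k' s\<bar> \<le> \<Phi>' s"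
  shows "\<bar>k b - k a\<bar> \<le> \<Phi> b - \<Phi> a"
proof -
  have "\<Phi> a - k a \<le> \<Phi> b - k b"
  proof (rule DERIV_nonneg_imp_nondecreasing[OF assms(1)])
    fix s
    assume s: "a \<le> s" "s \<le> b"
    show "\<exists>y. ((\<lambda>s. \<Phi> s - k s) has_real_derivative y) (at s) \<and> 0 \<le> y"
      using assms(2-4)[OF s] by (intro exI[of _ "\<Phi>' s - k' s"]) (auto intro: DERIV_diff)
  qed
  moreover have "\<Phi> a + k a \<le> \<Phi> b + k b"
  proof (rule DERIV_nonneg_imp_nondecreasing[OF assms(1)])
    fix s
    assume s: "a \<le> s" "s \<le> b"
    show "\<exists>y. ((\<lambda>s. \<Phi> s + k s) has_real_derivative y) (at s) \<and> 0 \<le> y"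
      using assms(2-4)[OF s] by (intro exI[of _ "\<Phi>' s + k' s"]) (auto intro: DERIV_add)
  qed
  ultimately show ?thesis
    by linarith
qed

lemma inverse_cube_sub_one_le:
  fixes r :: real
  assumes "0 \<le> r" "r < 1"
  shows "1 / (1 - r) ^ 3 - 1 \<le> 3 * r / (1 - r) ^ 3"
proof -
  have "1 - (1 - r) ^ 3 = 3 * r - r\<^sup>2 * (3 - r)"
    by (simp add: power2_eq_square power3_eq_cube algebra_simps)
  also have "\<dots> \<le> 3 * r"
    using assms by simp
  finally have "(1 - (1 - r) ^ 3) / (1 - r) ^ 3 \<le> 3 * r / (1 - r) ^ 3"
    using assms by (intro divide_right_mono) simp_all
  then show ?thesis
    using assms by (simp add: diff_divide_distrib)
qed

lemma matrix_mul_matrix_inv: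
  fixes A :: "'a::semiring_1^'n^'m"
  assumes "invertible A"
  shows "A ** matrix_inv A = mat 1"
  using assms unfolding invertible_def matrix_inv_def by (rule someI2_ex) blast

context highly_self_concordant
begin

lemma segment_in_K:
  assumes "x \<in> K" "y \<in> K" "0 \<le> t" "t \<le> 1"
  shows "x + t *\<^sub>R (y - x) \<in> K"
proof -
  have "x + t *\<^sub>R (y - x) = (1 - t) *\<^sub>R x + t *\<^sub>R y"
    by (simp add: algebra_simps)
  then show ?thesis
    using convexD_alt[OF convex_K assms] by simp
qed

lemma has_real_derivative_dderiv_segment:
  assumes "length hs < 4" "x + t *\<^sub>R h \<in> K"
  shows "((\<lambda>t. dderiv \<phi> hs (x + t *\<^sub>R h)) has_real_derivative dderiv \<phi> (h # hs) (x + t *\<^sub>R h)) (at t)"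
  using has_real_derivative_dderiv_line[of "dderiv \<phi> hs" x t h UNIV] dderiv_differentiable assms
  by (simp add: dderiv_dderiv)

lemma segment_direction_bound:
  assumes x: "x \<in> K" and y: "y \<in> K" and r: "lnorm (hess \<phi> x) (y - x) < 1"
    and t: "0 \<le> t" "t \<le> 1"
  shows "lnorm (hess \<phi> (x + t *\<^sub>R (y - x))) (y - x)
    \<le> lnorm (hess \<phi> x) (y - x) / (1 - t * lnorm (hess \<phi> x) (y - x))"
proof (cases "y = x")
  case True
  then show ?thesis
    by (simp add: lnorm_def)
next
  case False
  define h where "h = y - x"
  define r where "r = lnorm (hess \<phi> x) h"
  have h: "h \<noteq> 0"
    using False unfolding h_def by simp
  have on_segment: "x + s *\<^sub>R h \<in> K" if "0 \<le> s" "s \<le> t" for s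
    unfolding h_def using segment_in_K[OF x y] that t by simp
  have "inverse (sqrt (dderiv \<phi> [h, h] (x + 0 *\<^sub>R h)))
      \<le> inverse (sqrt (dderiv \<phi> [h, h] (x + t *\<^sub>R h))) + t"
  proof (rule inverse_sqrt_decrease_bound[OF t(1)])
    fix s
    assume s: "0 \<le> s" "s \<le> t"
    show "((\<lambda>s. dderiv \<phi> [h, h] (x + s *\<^sub>R h)) has_real_derivative dderiv \<phi> [h, h, h] (x + s *\<^sub>R h)) (at s)"
      using on_segment[OF s] by (intro has_real_derivative_dderiv_segment) simp_all
    show "dderiv \<phi> [h, h] (x + s *\<^sub>R h) > 0"
      using hessian_pos[OF on_segment[OF s] h] .
    show "\<bar>dderiv \<phi> [h, h, h] (x + s *\<^sub>R h)\<bar> \<le> 2 * sqrt (dderiv \<phi> [h, h] (x + s *\<^sub>R h)) ^ 3"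
      using third_dderiv_bound[OF on_segment[OF s], of h h h]
      unfolding lnorm_hess[OF on_segment[OF s]] by (simp add: power3_eq_cube mult.assoc)
  qed
  then have "inverse r \<le> inverse (lnorm (hess \<phi> (x + t *\<^sub>R h)) h) + t"
    unfolding r_def lnorm_hess[OF x] lnorm_hess[OF on_segment[OF t(1) order.refl]] by simp
  moreover have "r > 0" "lnorm (hess \<phi> (x + t *\<^sub>R h)) h > 0"
    unfolding r_def lnorm_hess[OF x] lnorm_hess[OF on_segment[OF t(1) order.refl]]
    using hessian_pos[OF x h] hessian_pos[OF on_segment[OF t(1) order.refl] h] by simp_all
  moreover have "t * r < 1"
    using r t \<open>r > 0\<close> unfolding r_def h_def by (smt (verit) mult_left_le_one_le)
  ultimately have "lnorm (hess \<phi> (x + t *\<^sub>R h)) h \<le> r / (1 - t * r)"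
    by (simp add: field_simps)
  then show ?thesis
    unfolding r_def h_def .
qed

lemma segment_local_norm_bound:
  assumes x: "x \<in> K" and y: "y \<in> K" and r: "lnorm (hess \<phi> x) (y - x) < 1"
    and t: "0 \<le> t" "t \<le> 1"
  shows "lnorm (hess \<phi> (x + t *\<^sub>R (y - x))) u * (1 - t * lnorm (hess \<phi> x) (y - x))
    \<le> lnorm (hess \<phi> x) u"
proof -
  define h where "h = y - x"
  define r where "r = lnorm (hess \<phi> x) h"
  have r0: "r \<ge> 0"
    unfolding r_def using lnorm_hess_nonneg[OF x] .
  have on_segment: "x + s *\<^sub>R h \<in> K" if "0 \<le> s" "s \<le> t" for s
    unfolding h_def using segment_in_K[OF x y] that t by simp
  have sr: "1 - s * r > 0" if "0 \<le> s" "s \<le> t" for s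
  proof -
    have "s * r \<le> 1 * r"
      using that t r0 by (intro mult_right_mono) auto
    then show ?thesis
      using r unfolding r_def h_def by simp
  qed
  have "dderiv \<phi> [u, u] (x + t *\<^sub>R h) * (1 - t * r)\<^sup>2 \<le> dderiv \<phi> [u, u] (x + 0 *\<^sub>R h)"
  proof (rule damped_growth_bound[OF t(1) r0])
    show "t * r < 1"
      using sr[OF t(1) order.refl] by simp
    fix s
    assume s: "0 \<le> s" "s \<le> t"
    note z = on_segment[OF s]
    show "((\<lambda>s. dderiv \<phi> [u, u] (x + s *\<^sub>R h)) has_real_derivative dderiv \<phi> [h, u, u] (x + s *\<^sub>R h)) (at s)"
      using z by (intro has_real_derivative_dderiv_segment) simp_all
    show "dderiv \<phi> [u, u] (x + s *\<^sub>R h) \<ge> 0"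
      using hessian_nonneg[OF z] .
    have "dderiv \<phi> [h, u, u] (x + s *\<^sub>R h) \<le> 2 * lnorm (hess \<phi> (x + s *\<^sub>R h)) h * dderiv \<phi> [u, u] (x + s *\<^sub>R h)"
      using third_dderiv_bound[OF z, of h u u] lnorm_hess_power2[OF z, of u]
      by (simp add: power2_eq_square mult.assoc)
    also have "\<dots> \<le> 2 * (r / (1 - s * r)) * dderiv \<phi> [u, u] (x + s *\<^sub>R h)"
      using segment_direction_bound[OF x y r s(1)] s t hessian_nonneg[OF z, of u]
      unfolding r_def h_def by (intro mult_right_mono mult_left_mono) simp_all
    finally show "dderiv \<phi> [h, u, u] (x + s *\<^sub>R h) * (1 - s * r) \<le> 2 * r * dderiv \<phi> [u, u] (x + s *\<^sub>R h)"
      using sr[OF s] by (simp add: field_simps)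
  qed
  then have "(lnorm (hess \<phi> (x + t *\<^sub>R h)) u * (1 - t * r))\<^sup>2 \<le> (lnorm (hess \<phi> x) u)\<^sup>2"
    using lnorm_hess_power2[OF x] lnorm_hess_power2[OF on_segment[OF t(1) order.refl]]
    by (simp add: power_mult_distrib)
  then show ?thesis
    using lnorm_hess_nonneg[OF x] unfolding r_def h_def by (rule power2_le_imp_le)
qed

lemma fourth_dderiv_segment_bound:
  assumes x: "x \<in> K" and y: "y \<in> K" and r: "lnorm (hess \<phi> x) (y - x) < 1"
    and s: "0 \<le> s" "s \<le> 1"
  defines "r \<equiv> lnorm (hess \<phi> x) (y - x)"
  shows "\<bar>dderiv \<phi> [y - x, q, v, v] (x + s *\<^sub>R (y - x))\<bar>
    \<le> 6 * r * lnorm (hess \<phi> x) q * (lnorm (hess \<phi> x) v)\<^sup>2 / (1 - s * r) ^ 4"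
proof -
  define z where "z = x + s *\<^sub>R (y - x)"
  have z: "z \<in> K"
    unfolding z_def using segment_in_K[OF x y s] .
  have "s * r \<le> 1 * r"
    using s lnorm_hess_nonneg[OF x] unfolding r_def by (intro mult_right_mono) auto
  then have sr: "1 - s * r > 0"
    using r unfolding r_def by simp
  have local_norm: "lnorm (hess \<phi> z) u \<le> lnorm (hess \<phi> x) u / (1 - s * r)" for u
    using segment_local_norm_bound[OF x y r s, of u] sr unfolding z_def r_def by (simp add: field_simps)
  have "\<bar>dderiv \<phi> [y - x, q, v, v] z\<bar>
      \<le> 6 * lnorm (hess \<phi> z) (y - x) * lnorm (hess \<phi> z) q * (lnorm (hess \<phi> z) v)\<^sup>2"
    using fourth_dderiv_bound[OF z] .
  also have "\<dots> \<le> 6 * (r / (1 - s * r)) * (lnorm (hess \<phi> x) q / (1 - s * r))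
      * (lnorm (hess \<phi> x) v / (1 - s * r))\<^sup>2"
    using segment_direction_bound[OF x y r s] local_norm lnorm_hess_nonneg[OF z]
      lnorm_hess_nonneg[OF x] sr
    unfolding z_def[symmetric] r_def
    by (intro mult_mono power_mono mult_nonneg_nonneg) simp_all
  also have "\<dots> = 6 * r * lnorm (hess \<phi> x) q * (lnorm (hess \<phi> x) v)\<^sup>2 / (1 - s * r) ^ 4"
    using sr by (simp add: field_simps power2_eq_square power4_eq_xxxx)
  finally show ?thesis
    unfolding z_def .
qed

(* The fourth-derivative bound along the segment is the derivative of the comparison function
   s \<mapsto> 2 ||q||_x ||v||_x^2 / (1 - s r)^3. *)
lemma third_dderiv_lipschitz:
  assumes x: "x \<in> K" and y: "y \<in> K" and r: "lnorm (hess \<phi> x) (y - x) < 1"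
  defines "r \<equiv> lnorm (hess \<phi> x) (y - x)"
  shows "\<bar>dderiv \<phi> [q, v, v] x - dderiv \<phi> [q, v, v] y\<bar>
    \<le> 6 / (1 - r) ^ 3 * (lnorm (hess \<phi> x) v)\<^sup>2 * r * lnorm (hess \<phi> x) q"
proof -
  define h where "h = y - x"
  define c where "c = 2 * lnorm (hess \<phi> x) q * (lnorm (hess \<phi> x) v)\<^sup>2"
  define \<Phi> where "\<Phi> = (\<lambda>s. c * inverse ((1 - s * r) ^ 3))"
  have r0: "0 \<le> r" and r1: "r < 1"
    using lnorm_hess_nonneg[OF x] r unfolding r_def by simp_all
  have c: "c \<ge> 0"
    unfolding c_def using lnorm_hess_nonneg[OF x] by simp
  have "\<bar>dderiv \<phi> [q, v, v] (x + 1 *\<^sub>R h) - dderiv \<phi> [q, v, v] (x + 0 *\<^sub>R h)\<bar> \<le> \<Phi> 1 - \<Phi> 0"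
  proof (rule abs_diff_le_dominating_derivative[where k' = "\<lambda>s. dderiv \<phi> [h, q, v, v] (x + s *\<^sub>R h)"
        and \<Phi>' = "\<lambda>s. 3 * r * c / (1 - s * r) ^ 4"])
    fix s :: real
    assume s: "0 \<le> s" "s \<le> 1"
    have "s * r \<le> 1 * r"
      using s r0 by (intro mult_right_mono) auto
    then have sr: "1 - s * r \<noteq> 0"
      using r1 by simp
    show "((\<lambda>s. dderiv \<phi> [q, v, v] (x + s *\<^sub>R h)) has_real_derivative dderiv \<phi> [h, q, v, v] (x + s *\<^sub>R h)) (at s)"
      using segment_in_K[OF x y s] unfolding h_def by (intro has_real_derivative_dderiv_segment) simp_all
    have "((\<lambda>s. (1 - s * r) ^ 3) has_real_derivative 3 * (1 - s * r)\<^sup>2 * (- r)) (at s)"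
      by (auto intro!: derivative_eq_intros)
    then have "(\<Phi> has_real_derivative
        c * (- (inverse ((1 - s * r) ^ 3) * (3 * (1 - s * r)\<^sup>2 * (- r)) * inverse ((1 - s * r) ^ 3)))) (at s)"
      unfolding \<Phi>_def using sr by (intro DERIV_cmult DERIV_inverse') simp_all
    moreover have "c * (- (inverse (w ^ 3) * (3 * w\<^sup>2 * (- r)) * inverse (w ^ 3))) = 3 * r * c / w ^ 4"
      if "w \<noteq> 0" for w
      using that by (simp add: field_simps power2_eq_square power3_eq_cube power4_eq_xxxx)
    ultimately show "(\<Phi> has_real_derivative 3 * r * c / (1 - s * r) ^ 4) (at s)"
      using sr by simp
    show "\<bar>dderiv \<phi> [h, q, v, v] (x + s *\<^sub>R h)\<bar> \<le> 3 * r * c / (1 - s * r) ^ 4"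
      using fourth_dderiv_segment_bound[OF x y r s, of q v] unfolding c_def r_def h_def by simp
  qed simp
  also have "\<dots> = c * (1 / (1 - r) ^ 3 - 1)"
    unfolding \<Phi>_def by (simp add: algebra_simps inverse_eq_divide)
  also have "\<dots> \<le> c * (3 * r / (1 - r) ^ 3)"
    using inverse_cube_sub_one_le[OF r0 r1] c by (rule mult_left_mono)
  finally show ?thesis
    unfolding c_def h_def by (simp add: field_simps)
qed

(* The supremum defining the dual norm is attained at q = g(z)^-1 p. *)
lemma dual_lnorm_le:
  assumes z: "z \<in> K" and C: "C \<ge> 0"
    and bound: "\<And>q. \<bar>p \<bullet> q\<bar> \<le> C * lnorm (hess \<phi> z) q"
  shows "lnorm (matrix_inv (hess \<phi> z)) p \<le> C"
proof -
  define q where "q = matrix_inv (hess \<phi> z) *v p"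
  have "hess \<phi> z *v q = p"
    using barrier z unfolding q_def hsc_barrier_def
    by (simp add: matrix_vector_mul_assoc matrix_mul_matrix_inv)
  then have pq: "p \<bullet> q = (lnorm (hess \<phi> z) q)\<^sup>2"
    using inner_hess[OF z, of q] lnorm_hess_power2[OF z, of q] by (simp add: inner_commute)
  have "lnorm (matrix_inv (hess \<phi> z)) p = sqrt ((lnorm (hess \<phi> z) q)\<^sup>2)"
    unfolding lnorm_def[of "matrix_inv _"] q_def[symmetric] pq ..
  then have "lnorm (matrix_inv (hess \<phi> z)) p = lnorm (hess \<phi> z) q"
    using lnorm_hess_nonneg[OF z, of q] by simp
  moreover have "lnorm (hess \<phi> z) q * lnorm (hess \<phi> z) q \<le> C * lnorm (hess \<phi> z) q"
    using bound[of q] unfolding pq by (simp add: power2_eq_square)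
  ultimately show ?thesis
    using C lnorm_hess_nonneg[OF z, of q]
    by (metis less_eq_real_def mult_right_le_imp_le order.trans mult_eq_0_iff)
qed

lemma Dg_inner: "z \<in> K \<Longrightarrow> Dg \<phi> z v w \<bullet> q = dderiv \<phi> [q, v, w] z"
  unfolding Dg_def by (rule inner_vec_of_linear) (use linear_dderiv[of "[v, w]" z] in simp)

theorem Dg_lipschitz:
  assumes x: "x \<in> K" and y: "y \<in> K" and r: "lnorm (hess \<phi> x) (y - x) < 1"
  shows "lnorm (matrix_inv (hess \<phi> x)) (Dg \<phi> x v v - Dg \<phi> y v v)
    \<le> 6 / (1 - lnorm (hess \<phi> x) (y - x)) ^ 3 * (lnorm (hess \<phi> x) v)\<^sup>2 * lnorm (hess \<phi> x) (y - x)"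
proof (rule dual_lnorm_le[OF x])
  show "0 \<le> 6 / (1 - lnorm (hess \<phi> x) (y - x)) ^ 3 * (lnorm (hess \<phi> x) v)\<^sup>2 * lnorm (hess \<phi> x) (y - x)"
    using r lnorm_hess_nonneg[OF x] by simp
  show "\<bar>(Dg \<phi> x v v - Dg \<phi> y v v) \<bullet> q\<bar>
    \<le> 6 / (1 - lnorm (hess \<phi> x) (y - x)) ^ 3 * (lnorm (hess \<phi> x) v)\<^sup>2 * lnorm (hess \<phi> x) (y - x)
      * lnorm (hess \<phi> x) q" for q
    using third_dderiv_lipschitz[OF x y r, of q v] by (simp add: inner_diff_left Dg_inner x y)
qed

theorem Dg_difference_bound:
  assumes x: "x \<in> K"
  shows "lnorm (matrix_inv (hess \<phi> x)) (Dg \<phi> x v v - Dg \<phi> x w w)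
    \<le> 2 * lnorm (hess \<phi> x) (v - w) * lnorm (hess \<phi> x) (v + w)"
proof (rule dual_lnorm_le[OF x])
  interpret bounded_sym_trilinear_form "\<lambda>a b. dderiv \<phi> [a, b] x" "\<lambda>a b c. dderiv \<phi> [a, b, c] x" 2
    by (rule bounded_sym_trilinear_third_dderiv[OF x])
  show "0 \<le> 2 * lnorm (hess \<phi> x) (v - w) * lnorm (hess \<phi> x) (v + w)"
    using lnorm_hess_nonneg[OF x] by simp
  fix q
  have "(Dg \<phi> x v v - Dg \<phi> x w w) \<bullet> q = dderiv \<phi> [q, v - w, v + w] x"
    using T_swap23[of q v w] by (simp add: inner_diff_left Dg_inner x T_simps)
  then show "\<bar>(Dg \<phi> x v v - Dg \<phi> x w w) \<bullet> q\<bar>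
    \<le> 2 * lnorm (hess \<phi> x) (v - w) * lnorm (hess \<phi> x) (v + w) * lnorm (hess \<phi> x) q"
    using third_dderiv_bound[OF x, of q "v - w" "v + w"] by (simp add: algebra_simps)
qed

end

theorem mainTheorem6:
  fixes K :: "(real^'n) set" and \<phi> :: "real^'n \<Rightarrow> real"
  assumes "open K" and "convex K" and "hsc_barrier K \<phi>"
    and "x \<in> K" and "y \<in> K" and "lnorm (hess \<phi> x) (y - x) < 1"
  shows "(\<forall>v. lnorm (matrix_inv (hess \<phi> x)) (Dg \<phi> x v v - Dg \<phi> y v v)
           \<le> 6 / (1 - lnorm (hess \<phi> x) (y - x)) ^ 3 * (lnorm (hess \<phi> x) v)\<^sup>2
              * lnorm (hess \<phi> x) (y - x))
         \<and> (\<forall>v w. lnorm (matrix_inv (hess \<phi> x)) (Dg \<phi> x v v - Dg \<phi> x w w)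
           \<le> 2 * lnorm (hess \<phi> x) (v - w) * lnorm (hess \<phi> x) (v + w))"
proof -
  interpret highly_self_concordant K \<phi>
    using assms(1-3) by unfold_locales
  show ?thesis
    using Dg_lipschitz[OF assms(4-6)] Dg_difference_bound[OF assms(4)] by blast
qed

end
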